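(* Let $n\ge3$ and let $\alpha=(\alpha_1,\dots,\alpha_\ell)$ be a valid nonempty prefix with $\ell<n$. Partition $[n]\setminus\{\alpha_1,\dots,\alpha_\ell\}$ into maximal sets $P_1,\dots,P_m$ of consecutive integers and let $s_t=\sum_{p\in P_t}c_p$. Define $r_k^c$ by $\sum_{k\ge0}r_k^cx^k=\prod_{t=1}^mF_{s_t}(x)$. Then the number of ménage permutations in $S_n$ whose one-line notation begins with $\alpha$ equals $$\sum_{k=0}^{n-\ell}(-1)^k\,r_k^c\,(n-\ell-k)!.$$
   Context: A ménage permutation is $\pi\in S_n$ with $\pi(i)\ne i$ and $\pi(i)+1\not\equiv i\pmod n$ for all $i\in[n]$; it begins with prefix $\alpha$ if $\pi(k)=\alpha_k$ for $k\le\ell$; $\alpha$ is valid if some ménage permutation begins with it. For $i\notin\{\alpha_1,\dots,\alpha_\ell\}$: $c_i=0$ if $i<\ell$, $c_i=1$ if $i=\ell$ or $i=n$, $c_i=2$ if $\ell<i<n$. Fibonacci polynomials: $F_0(x)=1$, $F_1(x)=1+x$, $F_k(x)=xF_{k-2}(x)+F_{k-1}(x)$ for $k\ge2$. *)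

theory Defs
  imports "HOL-Combinatorics.Permutations" "HOL-Computational_Algebra.Polynomial"
begin

definition menage :: "nat \<Rightarrow> (nat \<Rightarrow> nat) \<Rightarrow> bool" where
  "menage n \<pi> \<longleftrightarrow> \<pi> permutes {1..n} \<and>
     (\<forall>i\<in>{1..n}. \<pi> i \<noteq> i \<and> (\<pi> i + 1) mod n \<noteq> i mod n)"

definition begins_with :: "(nat \<Rightarrow> nat) \<Rightarrow> nat list \<Rightarrow> bool" where
  "begins_with \<pi> \<alpha> \<longleftrightarrow> (\<forall>k\<in>{1..length \<alpha>}. \<pi> k = \<alpha> ! (k - 1))"

definition valid_prefix :: "nat \<Rightarrow> nat list \<Rightarrow> bool" where
  "valid_prefix n \<alpha> \<longleftrightarrow> (\<exists>\<pi>. menage n \<pi> \<and> begins_with \<pi> \<alpha>)"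

definition cwt :: "nat \<Rightarrow> nat list \<Rightarrow> nat \<Rightarrow> nat" where
  "cwt n \<alpha> i = (if i < length \<alpha> then 0
                  else if i = length \<alpha> \<or> i = n then 1 else 2)"

definition remaining :: "nat \<Rightarrow> nat list \<Rightarrow> nat set" where
  "remaining n \<alpha> = {1..n} - set \<alpha>"

definition maximal_blocks :: "nat set \<Rightarrow> nat set set" where
  "maximal_blocks R = {{a..b} | a b. a \<le> b \<and> {a..b} \<subseteq> R \<and>
                                 (a = 0 \<or> a - 1 \<notin> R) \<and> b + 1 \<notin> R}"

fun fibpoly :: "nat \<Rightarrow> int poly" where
  "fibpoly 0 = 1"
| "fibpoly (Suc 0) = [:1, 1:]"
| "fibpoly (Suc (Suc k)) = [:0, 1:] * fibpoly k + fibpoly (Suc k)"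

definition rook_poly :: "nat \<Rightarrow> nat list \<Rightarrow> int poly" where
  "rook_poly n \<alpha> = (\<Prod>P\<in>maximal_blocks (remaining n \<alpha>). fibpoly (\<Sum>p\<in>P. cwt n \<alpha> p))"

end

theory Submission
  imports Defs
begin

text \<open>Fixing the prefix \<open>\<alpha>\<close> leaves a rook problem: a menage permutation beginning with
  \<open>\<alpha>\<close> is a bijection from the free rows \<open>l + 1, \<dots>, n\<close> onto the remaining values that avoids
  the cells \<open>(i, i)\<close> and \<open>(i, i - 1)\<close>. Inclusion--exclusion over the forbidden cells hit
  gives \<open>\<Sum>\<^sub>k (-1)\<^sup>k r\<^sub>k (n - l - k)!\<close>, where \<open>r\<^sub>k\<close> counts non-attacking placements of
  \<open>k\<close> rooks on the forbidden cells. These cells form a staircase in which consecutive cells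
  attack each other, so rook placements are sets of staircase indices without two
  consecutive elements. The staircase falls apart into runs, one for each maximal block
  \<open>P\<^sub>t\<close> of remaining values, of length \<open>s\<^sub>t\<close>; runs far apart contribute independently, and
  the generating polynomial of the sets without two consecutive elements in a run of length
  \<open>s\<close> satisfies the Fibonacci recursion, hence equals \<open>F\<^sub>s\<close>.\<close>

section \<open>Subsets without two consecutive elements\<close>

definition nonconsecutive_subsets :: "nat set \<Rightarrow> nat set set" where
  "nonconsecutive_subsets D = {T. T \<subseteq> D \<and> (\<forall>x\<in>T. Suc x \<notin> T)}"

definition nonconsecutive_poly :: "nat set \<Rightarrow> int poly" where
  "nonconsecutive_poly D = (\<Sum>T\<in>nonconsecutive_subsets D. monom 1 (card T))"

lemma finite_nonconsecutive_subsets: "finite D \<Longrightarrow> finite (nonconsecutive_subsets D)"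
  by (rule finite_subset[of _ "Pow D"]) (auto simp: nonconsecutive_subsets_def)

lemma nonconsecutive_poly_empty [simp]: "nonconsecutive_poly {} = 1"
proof -
  have "nonconsecutive_subsets {} = {{}}"
    by (auto simp: nonconsecutive_subsets_def)
  then show ?thesis
    by (simp add: nonconsecutive_poly_def one_pCons)
qed

lemma nonconsecutive_poly_remove_run_end:
  assumes "finite D" and "M \<in> D" and "Suc M \<notin> D"
  shows "nonconsecutive_poly D =
    nonconsecutive_poly (D - {M}) + [:0, 1:] * nonconsecutive_poly (D - {M, M - 1})"
proof -
  let ?with = "insert M ` nonconsecutive_subsets (D - {M, M - 1})"
  have split: "nonconsecutive_subsets D = nonconsecutive_subsets (D - {M}) \<union> ?with"
  proof (intro equalityI subsetI)
    fix T assume T: "T \<in> nonconsecutive_subsets D"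
    show "T \<in> nonconsecutive_subsets (D - {M}) \<union> ?with"
    proof (cases "M \<in> T")
      case True
      then have "T = insert M (T - {M})" "T - {M} \<in> nonconsecutive_subsets (D - {M, M - 1})"
        using T by (auto simp: nonconsecutive_subsets_def)
      then show ?thesis by blast
    qed (use T in \<open>auto simp: nonconsecutive_subsets_def\<close>)
  qed (use assms in \<open>auto simp: nonconsecutive_subsets_def\<close>)
  have disjoint: "nonconsecutive_subsets (D - {M}) \<inter> ?with = {}"
    by (auto simp: nonconsecutive_subsets_def)
  have inj: "inj_on (insert M) (nonconsecutive_subsets (D - {M, M - 1}))"
    by (rule inj_onI) (auto simp: nonconsecutive_subsets_def)
  have card_insert: "card (insert M T) = Suc (card T)"
    if "T \<in> nonconsecutive_subsets (D - {M, M - 1})" for T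
  proof -
    have "finite T" "M \<notin> T"
      using that assms(1) by (auto simp: nonconsecutive_subsets_def intro: finite_subset)
    then show ?thesis by simp
  qed
  have "(\<Sum>T\<in>?with. monom 1 (card T)) =
      (\<Sum>T\<in>nonconsecutive_subsets (D - {M, M - 1}). [:0, 1:] * monom (1::int) (card T))"
    unfolding sum.reindex[OF inj] by (intro sum.cong refl) (simp add: card_insert monom_Suc)
  then show ?thesis
    unfolding nonconsecutive_poly_def split
    using assms(1) disjoint
    by (simp add: sum.union_disjoint finite_nonconsecutive_subsets sum_distrib_left)
qed

lemma nonconsecutive_poly_atLeastLessThan: "nonconsecutive_poly {a..<a + k} = fibpoly k"
proof (induction k rule: fibpoly.induct)
  case 2
  have "nonconsecutive_poly {a} = nonconsecutive_poly {} + [:0, 1:] * nonconsecutive_poly {}"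
    using nonconsecutive_poly_remove_run_end[of "{a}" a] by simp
  then show ?case by (simp add: one_pCons)
next
  case (3 k)
  let ?M = "a + Suc k"
  have "{a..<a + Suc (Suc k)} - {?M} = {a..<a + Suc k}"
    and "{a..<a + Suc (Suc k)} - {?M, ?M - 1} = {a..<a + k}"
    by auto
  then have "nonconsecutive_poly {a..<a + Suc (Suc k)} =
      nonconsecutive_poly {a..<a + Suc k} + [:0, 1:] * nonconsecutive_poly {a..<a + k}"
    using nonconsecutive_poly_remove_run_end[of "{a..<a + Suc (Suc k)}" ?M] by simp
  then show ?case
    using 3 by simp
qed simp

lemma nonconsecutive_poly_convex:
  assumes "finite D" and convex: "\<And>x y z. x \<in> D \<Longrightarrow> y \<in> D \<Longrightarrow> x \<le> z \<Longrightarrow> z \<le> y \<Longrightarrow> z \<in> D"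
  shows "nonconsecutive_poly D = fibpoly (card D)"
proof (cases "D = {}")
  case False
  have "D \<subseteq> {Min D..Max D}"
    using assms(1) by (auto intro: Min_le Max_ge)
  moreover have "{Min D..Max D} \<subseteq> D"
  proof
    fix z assume "z \<in> {Min D..Max D}"
    then show "z \<in> D"
      using convex[of "Min D" "Max D" z] assms(1) False by simp
  qed
  ultimately have "D = {Min D..Max D}"
    by (rule equalityI)
  then obtain m M where "D = {m..M}"
    by blast
  with False have "D = {m..<m + (Suc M - m)}"
    by auto
  then show ?thesis
    by (simp add: nonconsecutive_poly_atLeastLessThan)
qed simp

lemma sum_coeff_nonconsecutive_poly:
  assumes "finite D" and "\<And>T. T \<in> nonconsecutive_subsets D \<Longrightarrow> card T \<le> N"
  shows "(\<Sum>k=0..N. coeff (nonconsecutive_poly D) k * c k) =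
    (\<Sum>T\<in>nonconsecutive_subsets D. c (card T))"
proof -
  have "(\<Sum>k=0..N. coeff (nonconsecutive_poly D) k * c k) =
      (\<Sum>k=0..N. \<Sum>T\<in>nonconsecutive_subsets D. if card T = k then c k else 0)"
    unfolding nonconsecutive_poly_def coeff_sum sum_distrib_right
    by (intro sum.cong refl) (simp add: coeff_monom)
  also have "\<dots> = (\<Sum>T\<in>nonconsecutive_subsets D. \<Sum>k=0..N. if card T = k then c k else 0)"
    by (rule sum.swap)
  also have "\<dots> = (\<Sum>T\<in>nonconsecutive_subsets D. c (card T))"
    using assms(2) by (intro sum.cong refl) (simp add: sum.delta')
  finally show ?thesis .
qed

definition separated :: "nat set \<Rightarrow> nat set \<Rightarrow> bool" where
  "separated X Y \<longleftrightarrow> (\<forall>x\<in>X. \<forall>y\<in>Y. Suc x < y \<or> Suc y < x)"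

lemma separated_disjoint: "separated X Y \<Longrightarrow> X \<inter> Y = {}"
  by (fastforce simp: separated_def)

lemma nonconsecutive_subsets_Un:
  assumes "separated X Y"
  shows "nonconsecutive_subsets (X \<union> Y) =
    (\<lambda>(T, U). T \<union> U) ` (nonconsecutive_subsets X \<times> nonconsecutive_subsets Y)"
proof (intro equalityI subsetI)
  fix T assume "T \<in> nonconsecutive_subsets (X \<union> Y)"
  then have "T = (\<lambda>(T, U). T \<union> U) (T \<inter> X, T \<inter> Y)"
    "(T \<inter> X, T \<inter> Y) \<in> nonconsecutive_subsets X \<times> nonconsecutive_subsets Y"
    by (auto simp: nonconsecutive_subsets_def)
  then show "T \<in> (\<lambda>(T, U). T \<union> U) ` (nonconsecutive_subsets X \<times> nonconsecutive_subsets Y)"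
    by (rule image_eqI)
next
  fix T assume "T \<in> (\<lambda>(T, U). T \<union> U) ` (nonconsecutive_subsets X \<times> nonconsecutive_subsets Y)"
  then obtain U V where T: "T = U \<union> V" "U \<in> nonconsecutive_subsets X" "V \<in> nonconsecutive_subsets Y"
    by auto
  have "Suc x \<notin> V" if "x \<in> U" for x
    using that T assms by (force simp: nonconsecutive_subsets_def separated_def)
  moreover have "Suc x \<notin> U" if "x \<in> V" for x
    using that T assms by (force simp: nonconsecutive_subsets_def separated_def)
  ultimately show "T \<in> nonconsecutive_subsets (X \<union> Y)"
    using T by (auto simp: nonconsecutive_subsets_def)
qed

lemma nonconsecutive_poly_Un:
  assumes "finite X" and "finite Y" and "separated X Y"
  shows "nonconsecutive_poly (X \<union> Y) = nonconsecutive_poly X * nonconsecutive_poly Y"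
proof -
  let ?h = "\<lambda>(T, U). T \<union> U"
  have disjoint: "X \<inter> Y = {}"
    using assms(3) by (rule separated_disjoint)
  have inj: "inj_on ?h (nonconsecutive_subsets X \<times> nonconsecutive_subsets Y)"
  proof (rule inj_onI)
    have parts: "fst p = ?h p \<inter> X \<and> snd p = ?h p \<inter> Y"
      if "p \<in> nonconsecutive_subsets X \<times> nonconsecutive_subsets Y" for p
      using that disjoint by (auto simp: nonconsecutive_subsets_def)
    fix p q assume "p \<in> nonconsecutive_subsets X \<times> nonconsecutive_subsets Y"
      and "q \<in> nonconsecutive_subsets X \<times> nonconsecutive_subsets Y" and "?h p = ?h q"
    then show "p = q"
      using parts by (metis prod_eq_iff)
  qed
  have card_Un: "card (T \<union> U) = card T + card U" if "T \<subseteq> X" "U \<subseteq> Y" for T U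
    using that assms(1,2) disjoint by (meson card_Un_disjoint disjoint_iff finite_subset subsetD)
  have "nonconsecutive_poly (X \<union> Y) =
      (\<Sum>(T, U)\<in>nonconsecutive_subsets X \<times> nonconsecutive_subsets Y. monom 1 (card (T \<union> U)))"
    unfolding nonconsecutive_poly_def nonconsecutive_subsets_Un[OF assms(3)] sum.reindex[OF inj]
    by (simp add: case_prod_unfold)
  also have "\<dots> = (\<Sum>(T, U)\<in>nonconsecutive_subsets X \<times> nonconsecutive_subsets Y.
      monom 1 (card T) * monom 1 (card U))"
    by (intro sum.cong refl) (clarsimp simp: nonconsecutive_subsets_def card_Un mult_monom)
  also have "\<dots> = nonconsecutive_poly X * nonconsecutive_poly Y"
    unfolding nonconsecutive_poly_def sum_product sum.cartesian_product by simp
  finally show ?thesis .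
qed

lemma nonconsecutive_poly_UN:
  assumes "finite \<F>" and "\<And>B. B \<in> \<F> \<Longrightarrow> finite (f B)"
    and "\<And>B B'. B \<in> \<F> \<Longrightarrow> B' \<in> \<F> \<Longrightarrow> B \<noteq> B' \<Longrightarrow> separated (f B) (f B')"
  shows "nonconsecutive_poly (\<Union>B\<in>\<F>. f B) = (\<Prod>B\<in>\<F>. nonconsecutive_poly (f B))"
  using assms
proof (induction \<F> rule: finite_induct)
  case (insert B \<F>)
  have "separated (f B) (\<Union>B'\<in>\<F>. f B')"
    unfolding separated_def
  proof (intro ballI)
    fix x y assume x: "x \<in> f B" and "y \<in> (\<Union>B'\<in>\<F>. f B')"
    then obtain B' where "B' \<in> \<F>" "y \<in> f B'"
      by blast
    moreover have "separated (f B) (f B')"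
      using insert.prems(2) insert.hyps(2) \<open>B' \<in> \<F>\<close> by blast
    ultimately show "Suc x < y \<or> Suc y < x"
      using x by (simp add: separated_def)
  qed
  moreover have "finite (f B)" "finite (\<Union>B'\<in>\<F>. f B')"
    using insert.hyps(1) insert.prems(1) by auto
  moreover have "nonconsecutive_poly (\<Union>B'\<in>\<F>. f B') = (\<Prod>B'\<in>\<F>. nonconsecutive_poly (f B'))"
    by (rule insert.IH) (use insert.prems in auto)
  ultimately show ?case
    using insert.hyps nonconsecutive_poly_Un[of "f B" "\<Union>B'\<in>\<F>. f B'"] by simp
qed simp

section \<open>Maximal blocks\<close>

lemma finite_maximal_blocks: "finite R \<Longrightarrow> finite (maximal_blocks R)"
  by (rule finite_subset[of _ "Pow R"]) (auto simp: maximal_blocks_def)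

lemma maximal_blocks_cover:
  assumes "finite R"
  shows "\<Union>(maximal_blocks R) = R"
proof
  show "\<Union>(maximal_blocks R) \<subseteq> R"
    by (auto simp: maximal_blocks_def)
  show "R \<subseteq> \<Union>(maximal_blocks R)"
  proof
    fix x assume x: "x \<in> R"
    define A where "A = {a. a \<le> x \<and> {a..x} \<subseteq> R}"
    define B where "B = {b. x \<le> b \<and> {x..b} \<subseteq> R}"
    have "A \<subseteq> R" "B \<subseteq> R" "x \<in> A" "x \<in> B"
      using x by (auto simp: A_def B_def)
    then have fin: "finite A" "finite B" and ne: "A \<noteq> {}" "B \<noteq> {}"
      using assms finite_subset by auto
    have a: "Min A \<le> x" "{Min A..x} \<subseteq> R" and b: "x \<le> Max B" "{x..Max B} \<subseteq> R"
      using Min_in[OF fin(1) ne(1)] Max_in[OF fin(2) ne(2)] by (auto simp: A_def B_def)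
    have "Min A - 1 \<notin> R" if "Min A \<noteq> 0"
    proof
      assume "Min A - 1 \<in> R"
      moreover have "{Min A - 1..x} = insert (Min A - 1) {Min A..x}"
        using a(1) that by (subst Icc_eq_insert_lb_nat) auto
      ultimately have "Min A - 1 \<in> A"
        using a by (auto simp: A_def)
      then show False
        using Min_le[OF fin(1)] that by fastforce
    qed
    moreover have "Max B + 1 \<notin> R"
    proof
      assume "Max B + 1 \<in> R"
      then have "Max B + 1 \<in> B"
        using b by (auto simp: B_def atLeastAtMostSuc_conv)
      then show False
        using Max_ge[OF fin(2)] by fastforce
    qed
    moreover have "{Min A..Max B} \<subseteq> R"
    proof
      fix y assume "y \<in> {Min A..Max B}"
      then show "y \<in> R"
        using a(2) b(2) by (cases "y \<le> x") auto
    qed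
    ultimately have "{Min A..Max B} \<in> maximal_blocks R"
      using a b unfolding maximal_blocks_def by (auto intro: le_trans)
    then show "x \<in> \<Union>(maximal_blocks R)"
      using a(1) b(1) atLeastAtMost_iff by blast
  qed
qed

lemma maximal_blocks_IccD:
  assumes "{a..b} \<in> maximal_blocks R"
  shows "a \<le> b" "{a..b} \<subseteq> R" "a = 0 \<or> a - 1 \<notin> R" "b + 1 \<notin> R"
proof -
  obtain a' b' where "{a..b} = {a'..b'}" "a' \<le> b'" "{a'..b'} \<subseteq> R"
    "a' = 0 \<or> a' - 1 \<notin> R" "b' + 1 \<notin> R"
    using assms by (auto simp: maximal_blocks_def)
  moreover from this(1,2) have "a = a'" "b = b'"
    by (simp_all add: Icc_eq_Icc)
  ultimately show "a \<le> b" "{a..b} \<subseteq> R" "a = 0 \<or> a - 1 \<notin> R" "b + 1 \<notin> R"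
    by simp_all
qed

lemma maximal_blocks_touching_eq:
  assumes B: "{a..b} \<in> maximal_blocks R" and B': "{a'..b'} \<in> maximal_blocks R"
    and "a' \<le> Suc b" and "a \<le> Suc b'"
  shows "a = a' \<and> b = b'"
proof -
  note I = maximal_blocks_IccD[OF B] and I' = maximal_blocks_IccD[OF B']
  have "\<not> a < a'"
  proof
    assume "a < a'"
    then have "a' - 1 \<in> {a..b}"
      using assms(3) by auto
    then show False
      using I(2) I'(3) \<open>a < a'\<close> by auto
  qed
  moreover have "\<not> a' < a"
  proof
    assume "a' < a"
    then have "a - 1 \<in> {a'..b'}"
      using assms(4) by auto
    then show False
      using I'(2) I(3) \<open>a' < a\<close> by auto
  qed
  moreover have "\<not> b < b'"
  proof
    assume "b < b'"
    then have "b + 1 \<in> {a'..b'}"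
      using assms(3) by auto
    then show False
      using I'(2) I(4) by auto
  qed
  moreover have "\<not> b' < b"
  proof
    assume "b' < b"
    then have "b' + 1 \<in> {a..b}"
      using assms(4) by auto
    then show False
      using I(2) I'(4) by auto
  qed
  ultimately show ?thesis
    by simp
qed

lemma maximal_blocks_separated:
  assumes "B \<in> maximal_blocks R" and "B' \<in> maximal_blocks R" and "B \<noteq> B'"
  shows "separated B B'"
proof -
  obtain a b a' b' where B: "B = {a..b}" and B': "B' = {a'..b'}"
    using assms(1,2) by (auto simp: maximal_blocks_def)
  show ?thesis
    unfolding separated_def
  proof (intro ballI)
    fix x y assume "x \<in> B" "y \<in> B'"
    show "Suc x < y \<or> Suc y < x"
    proof (rule ccontr)
      assume "\<not> (Suc x < y \<or> Suc y < x)"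
      then have "a' \<le> Suc b" "a \<le> Suc b'"
        using \<open>x \<in> B\<close> \<open>y \<in> B'\<close> by (auto simp: B B')
      then show False
        using maximal_blocks_touching_eq[of a b R a' b'] assms by (simp add: B B')
    qed
  qed
qed

section \<open>Rook placements and inclusion--exclusion\<close>

definition non_attacking :: "('a \<times> 'b) set \<Rightarrow> bool" where
  "non_attacking S \<longleftrightarrow> (\<forall>p\<in>S. \<forall>q\<in>S. fst p = fst q \<longleftrightarrow> snd p = snd q)"

definition rook_placements :: "('a \<times> 'b) set \<Rightarrow> ('a \<times> 'b) set set" where
  "rook_placements F = {S. S \<subseteq> F \<and> non_attacking S}"

lemma non_attacking_imp_inj_on:
  assumes "non_attacking S"
  shows "inj_on fst S" and "inj_on snd S"
  using assms by (auto simp: non_attacking_def inj_on_def prod_eq_iff)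

lemma non_attacking_subset_graph:
  assumes "inj f" and "\<forall>p\<in>S. f (fst p) = snd p"
  shows "non_attacking S"
  using assms by (metis injD non_attacking_def)

lemma non_attacking_Un:
  assumes "non_attacking S" and "non_attacking T"
    and "fst ` S \<inter> fst ` T = {}" and "snd ` S \<inter> snd ` T = {}"
  shows "non_attacking (S \<union> T)"
  using assms unfolding non_attacking_def by (metis UnE disjoint_iff image_eqI)

lemma card_non_attacking_le:
  assumes "non_attacking S" and "S \<subseteq> A \<times> B" and "finite A"
  shows "card S \<le> card A"
proof -
  have "card S = card (fst ` S)"
    using non_attacking_imp_inj_on(1)[OF assms(1)]
    by (simp add: card_image)
  also have "\<dots> \<le> card A"
    using assms(2,3) by (intro card_mono) auto
  finally show ?thesis .
qed

lemma permutes_extending_exists: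
  assumes "finite A" and "T \<subseteq> A \<times> A" and "non_attacking T"
  obtains \<pi> where "\<pi> permutes A" and "\<forall>p\<in>T. \<pi> (fst p) = snd p"
proof -
  define f where "f x = (THE y. (x, y) \<in> T)" for x
  have f: "f x = y" if "(x, y) \<in> T" for x y
    unfolding f_def
    using assms(3) that by (intro the_equality) (auto simp: non_attacking_def, force)
  have finT: "finite T"
    using assms(1,2) by (meson finite_SigmaI finite_subset)
  have "bij_betw f (fst ` T) (snd ` T)"
  proof (rule bij_betw_imageI)
    show "inj_on f (fst ` T)"
      using assms(3) f by (intro inj_onI) (force simp: non_attacking_def)
    show "f ` fst ` T = snd ` T"
      using f by force
  qed
  moreover obtain g where "bij_betw g (A - fst ` T) (A - snd ` T)"
  proof -
    have "card (A - fst ` T) = card (A - snd ` T)"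
      using assms(1,2) finT non_attacking_imp_inj_on[OF assms(3)]
      by (subst card_Diff_subset, force, force)+ (simp add: card_image)
    then show ?thesis
      using finite_same_card_bij assms(1) that by blast
  qed
  ultimately have "bij_betw (\<lambda>x. if x \<in> fst ` T then f x else g x)
      (fst ` T \<union> (A - fst ` T)) (snd ` T \<union> (A - snd ` T))"
    by (intro bij_betw_disjoint_Un) auto
  moreover have "fst ` T \<union> (A - fst ` T) = A" "snd ` T \<union> (A - snd ` T) = A"
    using assms(2) by auto
  ultimately have bij: "bij_betw (\<lambda>x. if x \<in> fst ` T then f x else g x) A A"
    by simp
  define \<pi> where "\<pi> x = (if x \<in> A then if x \<in> fst ` T then f x else g x else x)" for x
  have "bij_betw \<pi> A A"
    using bij by (rule bij_betw_cong[THEN iffD1, rotated]) (simp add: \<pi>_def)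
  then have "\<pi> permutes A"
    by (rule bij_imp_permutes) (simp add: \<pi>_def)
  moreover have "\<forall>p\<in>T. \<pi> (fst p) = snd p"
    using f assms(2) by (auto simp: \<pi>_def)
  ultimately show ?thesis
    using that by blast
qed

lemma card_permutes_extending:
  assumes "finite A" and "T \<subseteq> A \<times> A" and "non_attacking T"
  shows "card {\<pi>. \<pi> permutes A \<and> (\<forall>p\<in>T. \<pi> (fst p) = snd p)} = fact (card A - card T)"
proof -
  obtain \<pi>\<^sub>0 where \<pi>\<^sub>0: "\<pi>\<^sub>0 permutes A" "\<forall>p\<in>T. \<pi>\<^sub>0 (fst p) = snd p"
    using permutes_extending_exists[OF assms] .
  let ?E = "{\<pi>. \<pi> permutes A \<and> (\<forall>p\<in>T. \<pi> (fst p) = snd p)}"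
  let ?P = "{\<sigma>. \<sigma> permutes (A - fst ` T)}"
  have inv: "inv \<pi>\<^sub>0 \<circ> \<pi>\<^sub>0 = id" "\<pi>\<^sub>0 \<circ> inv \<pi>\<^sub>0 = id"
    using permutes_inv_o[OF \<pi>\<^sub>0(1)] by auto
  have "bij_betw (\<lambda>\<pi>. inv \<pi>\<^sub>0 \<circ> \<pi>) ?E ?P"
  proof (rule bij_betw_byWitness[where f' = "\<lambda>\<sigma>. \<pi>\<^sub>0 \<circ> \<sigma>"])
    show "\<forall>\<pi>\<in>?E. \<pi>\<^sub>0 \<circ> (inv \<pi>\<^sub>0 \<circ> \<pi>) = \<pi>" "\<forall>\<sigma>\<in>?P. inv \<pi>\<^sub>0 \<circ> (\<pi>\<^sub>0 \<circ> \<sigma>) = \<sigma>"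
      using inv by (simp_all add: comp_assoc[symmetric])
    show "(\<lambda>\<pi>. inv \<pi>\<^sub>0 \<circ> \<pi>) ` ?E \<subseteq> ?P"
    proof clarify
      fix \<pi> assume \<pi>: "\<pi> permutes A" "\<forall>p\<in>T. \<pi> (fst p) = snd p"
      have "(inv \<pi>\<^sub>0 \<circ> \<pi>) x = x" if "x \<in> fst ` T" for x
        using that \<pi> \<pi>\<^sub>0 permutes_inverses(2)[OF \<pi>\<^sub>0(1)] by force
      then show "(inv \<pi>\<^sub>0 \<circ> \<pi>) permutes (A - fst ` T)"
        using permutes_compose[OF \<pi>(1) permutes_inv[OF \<pi>\<^sub>0(1)]] unfolding permutes_def by blast
    qed
    show "(\<lambda>\<sigma>. \<pi>\<^sub>0 \<circ> \<sigma>) ` ?P \<subseteq> ?E"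
    proof clarify
      fix \<sigma> assume \<sigma>: "\<sigma> permutes (A - fst ` T)"
      then have "\<sigma> permutes A"
        by (rule permutes_subset) auto
      then show "(\<pi>\<^sub>0 \<circ> \<sigma>) permutes A \<and> (\<forall>p\<in>T. (\<pi>\<^sub>0 \<circ> \<sigma>) (fst p) = snd p)"
        using permutes_compose[OF _ \<pi>\<^sub>0(1)] \<pi>\<^sub>0(2) permutes_not_in[OF \<sigma>] by auto
    qed
  qed
  then have "card ?E = card ?P"
    by (rule bij_betw_same_card)
  also have "\<dots> = fact (card (A - fst ` T))"
    using assms(1) by (intro card_permutations) auto
  also have "card (A - fst ` T) = card A - card T"
  proof -
    have "finite T"
      using assms(1,2) by (meson finite_SigmaI finite_subset)
    then show ?thesis
      using assms(1,2) non_attacking_imp_inj_on(1)[OF assms(3)]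
      by (subst card_Diff_subset) (auto simp: card_image)
  qed
  finally show ?thesis .
qed

lemma prod_of_bool_eq:
  "finite A \<Longrightarrow> (\<Prod>x\<in>A. of_bool (P x)) = (of_bool (\<forall>x\<in>A. P x) :: 'a :: comm_semiring_1)"
  by (induction A rule: finite_induct) auto

lemma card_sieve:
  assumes "finite E" and "finite F"
  shows "int (card {x\<in>E. \<forall>p\<in>F. \<not> Q x p}) =
    (\<Sum>S\<in>Pow F. (-1) ^ card S * int (card {x\<in>E. \<forall>p\<in>S. Q x p}))"
proof -
  have "(\<Prod>p\<in>F. 1 - of_bool (Q x p)) = (of_bool (\<forall>p\<in>F. \<not> Q x p) :: int)" for x
  proof -
    have "(\<Prod>p\<in>F. 1 - of_bool (Q x p)) = (\<Prod>p\<in>F. of_bool (\<not> Q x p) :: int)"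
      by (intro prod.cong) auto
    then show ?thesis
      using assms(2) by (simp add: prod_of_bool_eq)
  qed
  then have "int (card {x\<in>E. \<forall>p\<in>F. \<not> Q x p}) = (\<Sum>x\<in>E. \<Prod>p\<in>F. 1 - of_bool (Q x p))"
    using assms(1) by (simp add: Int_def conj_commute)
  also have "\<dots> = (\<Sum>x\<in>E. \<Sum>S\<in>Pow F. (-1) ^ card S * (\<Prod>p\<in>S. of_bool (Q x p)))"
    using assms(2) by (simp add: prod_diff_conv_sum)
  also have "\<dots> = (\<Sum>S\<in>Pow F. (-1) ^ card S * (\<Sum>x\<in>E. of_bool (\<forall>p\<in>S. Q x p)))"
    using assms(2) by (subst sum.swap) (simp add: sum_distrib_left prod_of_bool_eq finite_subset)
  also have "\<dots> = (\<Sum>S\<in>Pow F. (-1) ^ card S * int (card {x\<in>E. \<forall>p\<in>S. Q x p}))"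
    using assms(1) by (simp add: Int_def conj_commute)
  finally show ?thesis .
qed

lemma card_permutes_extending_Un:
  assumes "finite A" and "T \<subseteq> A \<times> A" and "non_attacking T"
    and F: "F \<subseteq> (A - fst ` T) \<times> (A - snd ` T)" and "S \<in> rook_placements F"
  shows "card {\<pi>. \<pi> permutes A \<and> (\<forall>p\<in>T \<union> S. \<pi> (fst p) = snd p)} = fact (card A - card T - card S)"
proof -
  have S: "S \<subseteq> F" "non_attacking S"
    using assms(5) by (auto simp: rook_placements_def)
  have "fst ` S \<subseteq> A - fst ` T" "snd ` S \<subseteq> A - snd ` T"
    using S(1) F by force+
  then have disj: "fst ` T \<inter> fst ` S = {}" "snd ` T \<inter> snd ` S = {}"
    by blast+
  have "T \<union> S \<subseteq> A \<times> A"
    using S(1) F assms(2) by auto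
  moreover have "non_attacking (T \<union> S)"
    using disj S(2) assms(3) by (intro non_attacking_Un)
  ultimately have "card {\<pi>. \<pi> permutes A \<and> (\<forall>p\<in>T \<union> S. \<pi> (fst p) = snd p)} =
      fact (card A - card (T \<union> S))"
    by (rule card_permutes_extending[OF assms(1)])
  also have "card (T \<union> S) = card T + card S"
  proof (rule card_Un_disjoint)
    show "finite T" "finite S"
      using assms(1,2) S(1) F by (meson finite_SigmaI finite_subset finite_Diff)+
    show "T \<inter> S = {}"
      using disj(1) by blast
  qed
  finally show ?thesis
    by simp
qed

lemma card_permutes_avoiding:
  assumes "finite A" and "T \<subseteq> A \<times> A" and "non_attacking T"
    and F: "F \<subseteq> (A - fst ` T) \<times> (A - snd ` T)"
  shows "int (card {\<pi>. \<pi> permutes A \<and> (\<forall>p\<in>T. \<pi> (fst p) = snd p) \<and> (\<forall>p\<in>F. \<pi> (fst p) \<noteq> snd p)})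
    = (\<Sum>S\<in>rook_placements F. (-1) ^ card S * fact (card A - card T - card S))"
proof -
  let ?E = "{\<pi>. \<pi> permutes A \<and> (\<forall>p\<in>T. \<pi> (fst p) = snd p)}"
  let ?ext = "\<lambda>S. card {\<pi>\<in>?E. \<forall>p\<in>S. \<pi> (fst p) = snd p}"
  have finE: "finite ?E"
    using finite_permutations[OF assms(1)] by (rule finite_subset[rotated]) auto
  have finF: "finite F"
    using assms(1) F by (meson finite_SigmaI finite_subset finite_Diff)
  have "{\<pi>. \<pi> permutes A \<and> (\<forall>p\<in>T. \<pi> (fst p) = snd p) \<and> (\<forall>p\<in>F. \<pi> (fst p) \<noteq> snd p)} =
      {\<pi>\<in>?E. \<forall>p\<in>F. \<not> \<pi> (fst p) = snd p}"
    by auto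
  then have "int (card {\<pi>. \<pi> permutes A \<and> (\<forall>p\<in>T. \<pi> (fst p) = snd p) \<and> (\<forall>p\<in>F. \<pi> (fst p) \<noteq> snd p)})
      = (\<Sum>S\<in>Pow F. (-1) ^ card S * int (?ext S))"
    using card_sieve[OF finE finF, of "\<lambda>\<pi> p. \<pi> (fst p) = snd p"] by simp
  also have "\<dots> = (\<Sum>S\<in>rook_placements F. (-1) ^ card S * int (?ext S))"
  proof (rule sum.mono_neutral_right)
    show "\<forall>S\<in>Pow F - rook_placements F. (-1) ^ card S * int (?ext S) = 0"
    proof
      fix S assume "S \<in> Pow F - rook_placements F"
      then have "\<not> non_attacking S"
        by (simp add: rook_placements_def)
      then have "{\<pi>\<in>?E. \<forall>p\<in>S. \<pi> (fst p) = snd p} = {}"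
        using non_attacking_subset_graph permutes_inj by blast
      then show "(-1) ^ card S * int (?ext S) = 0"
        by (simp only: card.empty of_nat_0 mult_zero_right)
    qed
  qed (auto simp: finF rook_placements_def)
  also have "\<dots> = (\<Sum>S\<in>rook_placements F. (-1) ^ card S * fact (card A - card T - card S))"
  proof (rule sum.cong[OF refl])
    fix S assume "S \<in> rook_placements F"
    moreover have "?ext S = card {\<pi>. \<pi> permutes A \<and> (\<forall>p\<in>T \<union> S. \<pi> (fst p) = snd p)}"
      by (simp add: ball_Un conj_assoc)
    ultimately show "(-1) ^ card S * int (?ext S) = (-1) ^ card S * fact (card A - card T - card S)"
      using card_permutes_extending_Un[OF assms] by (simp add: of_nat_fact)
  qed
  finally show ?thesis .
qed

section \<open>The staircase board\<close>

lemma nat_half_cases: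
  fixes t :: nat
  obtains k where "t = 2 * k" | k where "t = 2 * k + 1"
  by (metis oddE evenE)

text \<open>The forbidden cells \<open>(i, i)\<close> and \<open>(i, i - 1)\<close> of the menage board, listed as a
  staircase: \<open>2i - 1 \<mapsto> (i, i)\<close> and \<open>2i \<mapsto> (i + 1, i)\<close>. Two cells with consecutive indices
  share a row or a column, and no other two do, so non-attacking rook placements on a set of
  cells are exactly the sets of their indices without two consecutive elements.\<close>
definition stair_cell :: "nat \<Rightarrow> nat \<times> nat" where
  "stair_cell t = (Suc (t div 2), (t + 1) div 2)"

definition stair_indices :: "nat \<Rightarrow> nat \<Rightarrow> nat set \<Rightarrow> nat set" where
  "stair_indices n l X = {t. stair_cell t \<in> {Suc l..n} \<times> X}"

lemma inj_stair_cell: "inj stair_cell"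
proof (rule injI)
  fix t t' assume "stair_cell t = stair_cell t'"
  then show "t = t'"
    by (cases t rule: nat_half_cases; cases t' rule: nat_half_cases) (auto simp: stair_cell_def)
qed

lemma stair_cell_image_iff:
  "(i, j) \<in> stair_cell ` stair_indices n l X \<longleftrightarrow>
    l < i \<and> i \<le> n \<and> j \<in> X \<and> (j = i \<or> Suc j = i)"
proof
  assume "(i, j) \<in> stair_cell ` stair_indices n l X"
  then obtain t where "stair_cell t = (i, j)" "stair_cell t \<in> {Suc l..n} \<times> X"
    by (auto simp: stair_indices_def)
  then show "l < i \<and> i \<le> n \<and> j \<in> X \<and> (j = i \<or> Suc j = i)"
    by (cases t rule: nat_half_cases) (auto simp: stair_cell_def)
next
  assume *: "l < i \<and> i \<le> n \<and> j \<in> X \<and> (j = i \<or> Suc j = i)"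
  then have "stair_cell (i + j - 1) = (i, j)"
    by (auto simp: stair_cell_def)
  with * show "(i, j) \<in> stair_cell ` stair_indices n l X"
    by (auto simp: stair_indices_def intro!: image_eqI[of _ _ "i + j - 1"])
qed

lemma stair_cell_same_row_iff_same_col:
  "(fst (stair_cell t) = fst (stair_cell u) \<longleftrightarrow> snd (stair_cell t) = snd (stair_cell u))
    \<longleftrightarrow> u \<noteq> Suc t \<and> t \<noteq> Suc u"
  by (cases t rule: nat_half_cases; cases u rule: nat_half_cases; simp add: stair_cell_def; presburger)

lemma non_attacking_stair_cell_iff:
  "non_attacking (stair_cell ` T) \<longleftrightarrow> (\<forall>t\<in>T. Suc t \<notin> T)"
  unfolding non_attacking_def using stair_cell_same_row_iff_same_col by blast

lemma sum_rook_placements_stair_cell: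
  "(\<Sum>S\<in>rook_placements (stair_cell ` D). f (card S)) = (\<Sum>T\<in>nonconsecutive_subsets D. f (card T))"
proof -
  have "rook_placements (stair_cell ` D) = (\<lambda>T. stair_cell ` T) ` nonconsecutive_subsets D"
    by (auto simp: rook_placements_def nonconsecutive_subsets_def non_attacking_stair_cell_iff
        subset_image_iff)
  moreover have "inj_on (\<lambda>T. stair_cell ` T) (nonconsecutive_subsets D)"
    by (intro inj_onI) (simp add: inj_image_eq_iff[OF inj_stair_cell])
  moreover have "card (stair_cell ` T) = card T" for T
    using inj_stair_cell by (simp add: card_image inj_on_subset)
  ultimately show ?thesis
    by (simp add: sum.reindex)
qed

lemma card_nonconsecutive_stair_le:
  assumes "T \<in> nonconsecutive_subsets (stair_indices n l X)"
  shows "card T \<le> n - l"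
proof -
  have "non_attacking (stair_cell ` T)"
    using assms by (simp add: nonconsecutive_subsets_def non_attacking_stair_cell_iff)
  moreover have "stair_cell ` T \<subseteq> {Suc l..n} \<times> X"
    using assms by (auto simp: nonconsecutive_subsets_def stair_indices_def)
  ultimately have "card (stair_cell ` T) \<le> card {Suc l..n}"
    by (intro card_non_attacking_le) auto
  then show ?thesis
    using inj_stair_cell by (simp add: card_image inj_on_subset)
qed

lemma separated_stair_indices:
  assumes "separated X Y"
  shows "separated (stair_indices n l X) (stair_indices n l Y)"
  unfolding separated_def
proof (intro ballI)
  fix t u assume "t \<in> stair_indices n l X" "u \<in> stair_indices n l Y"
  then have "Suc ((t + 1) div 2) < (u + 1) div 2 \<or> Suc ((u + 1) div 2) < (t + 1) div 2"
    using assms by (auto simp: separated_def stair_indices_def stair_cell_def)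
  then show "Suc t < u \<or> Suc u < t"
    by (cases t rule: nat_half_cases; cases u rule: nat_half_cases) auto
qed

lemma stair_indices_atLeastAtMost_convex:
  assumes "t \<in> stair_indices n l {a..b}" and "u \<in> stair_indices n l {a..b}"
    and "t \<le> v" and "v \<le> u"
  shows "v \<in> stair_indices n l {a..b}"
proof -
  have "(t + 1) div 2 \<le> (v + 1) div 2" "(v + 1) div 2 \<le> (u + 1) div 2"
    "t div 2 \<le> v div 2" "v div 2 \<le> u div 2"
    using assms(3,4) by (auto intro: div_le_mono)
  then show ?thesis
    using assms(1,2) by (auto simp: stair_indices_def stair_cell_def)
qed

lemma finite_stair_indices: "finite (stair_indices n l X)"
  by (rule finite_subset[of _ "{..2 * n}"]) (auto simp: stair_indices_def stair_cell_def)

text \<open>Column \<open>p\<close> meets the free rows in the cells \<open>(p, p)\<close> and \<open>(p + 1, p)\<close>, and \<open>c\<^sub>p\<close>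
  counts those that exist.\<close>
lemma card_stair_indices:
  assumes "length \<alpha> < n" and "X \<subseteq> {1..n}"
  shows "card (stair_indices n (length \<alpha>) X) = (\<Sum>p\<in>X. cwt n \<alpha> p)"
proof -
  let ?S = "stair_indices n (length \<alpha>)"
  have single: "?S {p} = (if length \<alpha> < p then {2 * p - 1} else {}) \<union>
      (if length \<alpha> \<le> p \<and> p < n then {2 * p} else {})" if "p \<in> X" for p
    using that assms(2) by (auto simp: stair_indices_def stair_cell_def)
  have "card (?S X) = card (\<Union>p\<in>X. ?S {p})"
    by (rule arg_cong[where f = card]) (auto simp: stair_indices_def)
  also have "\<dots> = (\<Sum>p\<in>X. card (?S {p}))"
    using finite_subset[OF assms(2)]
    by (intro card_UN_disjoint) (auto simp: finite_stair_indices, auto simp: stair_indices_def)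
  also have "\<dots> = (\<Sum>p\<in>X. cwt n \<alpha> p)"
    using assms by (intro sum.cong refl) (auto simp: single cwt_def)
  finally show ?thesis .
qed

lemma rook_poly_eq_nonconsecutive_poly:
  assumes "length \<alpha> < n"
  shows "rook_poly n \<alpha> = nonconsecutive_poly (stair_indices n (length \<alpha>) (remaining n \<alpha>))"
proof -
  let ?R = "remaining n \<alpha>" and ?S = "stair_indices n (length \<alpha>)"
  have finR: "finite ?R"
    by (simp add: remaining_def)
  have "fibpoly (\<Sum>p\<in>B. cwt n \<alpha> p) = nonconsecutive_poly (?S B)" if block: "B \<in> maximal_blocks ?R" for B
  proof -
    obtain a b where B: "B = {a..b}"
      using block by (auto simp: maximal_blocks_def)
    have "B \<subseteq> remaining n \<alpha>"
      using maximal_blocks_IccD(2) block unfolding B by blast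
    then have "card (?S B) = (\<Sum>p\<in>B. cwt n \<alpha> p)"
      by (intro card_stair_indices[OF assms]) (auto simp: remaining_def)
    moreover have "nonconsecutive_poly (?S B) = fibpoly (card (?S B))"
      unfolding B
      by (rule nonconsecutive_poly_convex[OF finite_stair_indices stair_indices_atLeastAtMost_convex])
    ultimately show ?thesis
      by simp
  qed
  then have "rook_poly n \<alpha> = (\<Prod>B\<in>maximal_blocks ?R. nonconsecutive_poly (?S B))"
    unfolding rook_poly_def by (rule prod.cong[OF refl])
  also have "\<dots> = nonconsecutive_poly (\<Union>B\<in>maximal_blocks ?R. ?S B)"
    using finite_maximal_blocks[OF finR]
    by (intro nonconsecutive_poly_UN[symmetric])
      (auto simp: finite_stair_indices intro: separated_stair_indices maximal_blocks_separated)
  also have "(\<Union>B\<in>maximal_blocks ?R. ?S B) = ?S (\<Union>(maximal_blocks ?R))"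
    by (auto simp: stair_indices_def)
  finally show ?thesis
    by (simp add: maximal_blocks_cover[OF finR])
qed

section \<open>Menage permutations with a given prefix\<close>

definition prefix_cells :: "nat list \<Rightarrow> (nat \<times> nat) set" where
  "prefix_cells \<alpha> = (\<lambda>k. (k, \<alpha> ! (k - 1))) ` {1..length \<alpha>}"

lemma begins_with_iff_prefix_cells:
  "begins_with \<pi> \<alpha> \<longleftrightarrow> (\<forall>p\<in>prefix_cells \<alpha>. \<pi> (fst p) = snd p)"
  by (auto simp: begins_with_def prefix_cells_def)

lemma fst_image_prefix_cells: "fst ` prefix_cells \<alpha> = {1..length \<alpha>}"
  by (auto simp: prefix_cells_def image_image)

lemma snd_image_prefix_cells: "snd ` prefix_cells \<alpha> = set \<alpha>"
proof -
  have "{1..length \<alpha>} = Suc ` {..<length \<alpha>}"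
    by (simp add: image_Suc_lessThan)
  then have "snd ` prefix_cells \<alpha> = (\<lambda>i. \<alpha> ! i) ` {..<length \<alpha>}"
    unfolding prefix_cells_def by (simp add: image_image)
  also have "\<dots> = set \<alpha>"
    by (auto simp: in_set_conv_nth)
  finally show ?thesis .
qed

lemma card_prefix_cells: "card (prefix_cells \<alpha>) = length \<alpha>"
  unfolding prefix_cells_def by (subst card_image) (auto intro: inj_onI)

lemma prefix_cells_of_menage:
  assumes "menage n \<pi>\<^sub>0" and "begins_with \<pi>\<^sub>0 \<alpha>" and "length \<alpha> \<le> n"
  shows "prefix_cells \<alpha> \<subseteq> {1..n} \<times> {1..n}" and "non_attacking (prefix_cells \<alpha>)"
proof -
  have perm: "\<pi>\<^sub>0 permutes {1..n}"
    using assms(1) by (simp add: menage_def)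
  have graph: "\<forall>p\<in>prefix_cells \<alpha>. \<pi>\<^sub>0 (fst p) = snd p"
    using assms(2) by (simp add: begins_with_iff_prefix_cells)
  show "prefix_cells \<alpha> \<subseteq> {1..n} \<times> {1..n}"
  proof
    fix p assume "p \<in> prefix_cells \<alpha>"
    moreover have "fst p \<in> {1..n}"
      using calculation assms(3) by (auto simp: prefix_cells_def)
    ultimately show "p \<in> {1..n} \<times> {1..n}"
      using graph permutes_in_image[OF perm] by (metis mem_Times_iff)
  qed
  show "non_attacking (prefix_cells \<alpha>)"
    using graph permutes_inj[OF perm] by (rule non_attacking_subset_graph[rotated])
qed

lemma mod_Suc_eq_mod_iff:
  assumes "2 \<le> i" and "i \<le> n" and "1 \<le> j" and "j \<le> (n::nat)"
  shows "(j + 1) mod n = i mod n \<longleftrightarrow> j + 1 = i"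
proof -
  have "i mod n = (if i = n then 0 else i)"
    using assms by simp
  moreover have "(j + 1) mod n = (if j + 1 = n then 0 else if j = n then 1 else j + 1)"
    using assms by (auto simp: mod_Suc)
  ultimately show ?thesis
    using assms by auto
qed

lemma permutes_begins_with_remaining:
  assumes "\<pi> permutes {1..n}" and "begins_with \<pi> \<alpha>" and "length \<alpha> < i" and "i \<le> n"
  shows "\<pi> i \<in> remaining n \<alpha>"
proof -
  have "\<pi> i \<notin> set \<alpha>"
  proof
    assume "\<pi> i \<in> set \<alpha>"
    then obtain k where k: "k < length \<alpha>" "\<alpha> ! k = \<pi> i"
      by (auto simp: in_set_conv_nth)
    then have "\<pi> (Suc k) = \<pi> i"
      using assms(2) by (auto simp: begins_with_def)
    then have "Suc k = i"
      using permutes_inj[OF assms(1)] by (simp add: inj_eq)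
    then show False
      using k(1) assms(3) by simp
  qed
  moreover have "\<pi> i \<in> {1..n}"
    using permutes_in_image[OF assms(1)] assms(3,4) by simp
  ultimately show ?thesis
    by (simp add: remaining_def)
qed

lemma menage_iff_free_rows:
  assumes "menage n \<pi>\<^sub>0" and "begins_with \<pi>\<^sub>0 \<alpha>" and "\<alpha> \<noteq> []"
    and perm: "\<pi> permutes {1..n}" and "begins_with \<pi> \<alpha>"
  shows "menage n \<pi> \<longleftrightarrow> (\<forall>i\<in>{Suc (length \<alpha>)..n}. \<pi> i \<noteq> i \<and> Suc (\<pi> i) \<noteq> i)"
proof -
  let ?l = "length \<alpha>"
  have row: "\<pi> i \<noteq> i \<and> (\<pi> i + 1) mod n \<noteq> i mod n \<longleftrightarrow> i \<le> ?l \<or> \<pi> i \<noteq> i \<and> Suc (\<pi> i) \<noteq> i"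
    if i: "i \<in> {1..n}" for i
  proof (cases "i \<le> ?l")
    case True
    then have "\<pi> i = \<pi>\<^sub>0 i"
      using i assms(2,5) by (simp add: begins_with_def)
    then show ?thesis
      using True i assms(1) by (simp add: menage_def)
  next
    case False
    txt \<open>The prefix is nonempty, so the free row \<open>i\<close> has \<open>i \<ge> 2\<close>, and there the cyclic
      condition only forbids \<open>\<pi> i = i - 1\<close>.\<close>
    have "2 \<le> i"
      using False assms(3) by (cases \<alpha>) auto
    moreover have "\<pi> i \<in> {1..n}"
      using permutes_in_image[OF perm] i by simp
    ultimately show ?thesis
      using False i mod_Suc_eq_mod_iff[of i n "\<pi> i"] by auto
  qed
  have "menage n \<pi> \<longleftrightarrow> (\<forall>i\<in>{1..n}. i \<le> ?l \<or> \<pi> i \<noteq> i \<and> Suc (\<pi> i) \<noteq> i)"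
    using perm row by (simp add: menage_def)
  also have "\<dots> \<longleftrightarrow> (\<forall>i\<in>{Suc ?l..n}. \<pi> i \<noteq> i \<and> Suc (\<pi> i) \<noteq> i)"
  proof (intro iffI ballI)
    fix i assume "\<forall>i\<in>{1..n}. i \<le> ?l \<or> \<pi> i \<noteq> i \<and> Suc (\<pi> i) \<noteq> i" "i \<in> {Suc ?l..n}"
    then show "\<pi> i \<noteq> i \<and> Suc (\<pi> i) \<noteq> i"
      by (auto dest: bspec[of _ _ i])
  next
    fix i assume "\<forall>i\<in>{Suc ?l..n}. \<pi> i \<noteq> i \<and> Suc (\<pi> i) \<noteq> i" "i \<in> {1..n}"
    then show "i \<le> ?l \<or> \<pi> i \<noteq> i \<and> Suc (\<pi> i) \<noteq> i"
      by (auto dest: bspec[of _ _ i])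
  qed
  finally show ?thesis .
qed

lemma avoids_stair_iff_free_rows:
  assumes perm: "\<pi> permutes {1..n}" and "begins_with \<pi> \<alpha>"
  shows "(\<forall>p\<in>stair_cell ` stair_indices n (length \<alpha>) (remaining n \<alpha>). \<pi> (fst p) \<noteq> snd p) \<longleftrightarrow>
    (\<forall>i\<in>{Suc (length \<alpha>)..n}. \<pi> i \<noteq> i \<and> Suc (\<pi> i) \<noteq> i)"
    (is "?avoid \<longleftrightarrow> ?free")
proof
  assume ?free
  show ?avoid
  proof
    fix p assume p: "p \<in> stair_cell ` stair_indices n (length \<alpha>) (remaining n \<alpha>)"
    obtain i j where ij: "p = (i, j)"
      by fastforce
    with p have "i \<in> {Suc (length \<alpha>)..n}" "j = i \<or> Suc j = i"
      by (simp_all add: stair_cell_image_iff)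
    then show "\<pi> (fst p) \<noteq> snd p"
      using \<open>?free\<close> ij by auto
  qed
next
  assume avoid: ?avoid
  show ?free
  proof
    fix i assume i: "i \<in> {Suc (length \<alpha>)..n}"
    then have "\<pi> i \<in> remaining n \<alpha>"
      using permutes_begins_with_remaining[OF perm assms(2)] by simp
    then show "\<pi> i \<noteq> i \<and> Suc (\<pi> i) \<noteq> i"
      using avoid[rule_format, of "(i, \<pi> i)"] i by (auto simp: stair_cell_image_iff)
  qed
qed

lemma menage_iff_avoids_stair:
  assumes "menage n \<pi>\<^sub>0" and "begins_with \<pi>\<^sub>0 \<alpha>" and "\<alpha> \<noteq> []"
    and "\<pi> permutes {1..n}" and "begins_with \<pi> \<alpha>"
  shows "menage n \<pi> \<longleftrightarrow>
    (\<forall>p\<in>stair_cell ` stair_indices n (length \<alpha>) (remaining n \<alpha>). \<pi> (fst p) \<noteq> snd p)"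
  using menage_iff_free_rows[OF assms] avoids_stair_iff_free_rows[OF assms(4,5)] by simp

lemma card_menage_begins_with:
  assumes "valid_prefix n \<alpha>" and "\<alpha> \<noteq> []" and "length \<alpha> < n"
  shows "int (card {\<pi>. menage n \<pi> \<and> begins_with \<pi> \<alpha>}) =
    (\<Sum>S\<in>rook_placements (stair_cell ` stair_indices n (length \<alpha>) (remaining n \<alpha>)).
      (-1) ^ card S * fact (n - length \<alpha> - card S))"
proof -
  obtain \<pi>\<^sub>0 where \<pi>\<^sub>0: "menage n \<pi>\<^sub>0" "begins_with \<pi>\<^sub>0 \<alpha>"
    using assms(1) by (auto simp: valid_prefix_def)
  let ?F = "stair_cell ` stair_indices n (length \<alpha>) (remaining n \<alpha>)"
  note P = prefix_cells_of_menage[OF \<pi>\<^sub>0 less_imp_le[OF assms(3)]]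
  have set_eq: "{\<pi>. menage n \<pi> \<and> begins_with \<pi> \<alpha>} = {\<pi>. \<pi> permutes {1..n} \<and>
      (\<forall>p\<in>prefix_cells \<alpha>. \<pi> (fst p) = snd p) \<and> (\<forall>p\<in>?F. \<pi> (fst p) \<noteq> snd p)}"
  proof (intro Collect_cong)
    fix \<pi>
    show "menage n \<pi> \<and> begins_with \<pi> \<alpha> \<longleftrightarrow> \<pi> permutes {1..n} \<and>
      (\<forall>p\<in>prefix_cells \<alpha>. \<pi> (fst p) = snd p) \<and> (\<forall>p\<in>?F. \<pi> (fst p) \<noteq> snd p)"
      using menage_iff_avoids_stair[OF \<pi>\<^sub>0 assms(2), of \<pi>]
      by (auto simp: begins_with_iff_prefix_cells menage_def)
  qed
  have "?F \<subseteq> {Suc (length \<alpha>)..n} \<times> remaining n \<alpha>"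
    by (auto simp: stair_indices_def)
  then have F: "?F \<subseteq> ({1..n} - fst ` prefix_cells \<alpha>) \<times> ({1..n} - snd ` prefix_cells \<alpha>)"
    unfolding fst_image_prefix_cells snd_image_prefix_cells remaining_def by auto
  show ?thesis
    unfolding set_eq using card_permutes_avoiding[OF _ P F] by (simp add: card_prefix_cells)
qed

theorem mainTheorem10:
  fixes n :: nat and \<alpha> :: "nat list"
  assumes "n \<ge> 3" and "\<alpha> \<noteq> []" and "length \<alpha> < n" and "valid_prefix n \<alpha>"
  shows "int (card {\<pi>. menage n \<pi> \<and> begins_with \<pi> \<alpha>}) =
    (\<Sum>k=0..n - length \<alpha>. (-1) ^ k * coeff (rook_poly n \<alpha>) k * fact (n - length \<alpha> - k))"
proof -
  let ?l = "length \<alpha>"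
  let ?D = "stair_indices n ?l (remaining n \<alpha>)"
  have "int (card {\<pi>. menage n \<pi> \<and> begins_with \<pi> \<alpha>}) =
      (\<Sum>S\<in>rook_placements (stair_cell ` ?D). (-1) ^ card S * fact (n - ?l - card S))"
    by (rule card_menage_begins_with[OF assms(4,2,3)])
  also have "\<dots> = (\<Sum>T\<in>nonconsecutive_subsets ?D. (-1) ^ card T * fact (n - ?l - card T))"
    by (rule sum_rook_placements_stair_cell)
  also have "\<dots> = (\<Sum>k=0..n - ?l. coeff (nonconsecutive_poly ?D) k * ((-1) ^ k * fact (n - ?l - k)))"
    by (rule sum_coeff_nonconsecutive_poly[symmetric])
      (simp_all add: finite_stair_indices card_nonconsecutive_stair_le)
  also have "\<dots> = (\<Sum>k=0..n - ?l. (-1) ^ k * coeff (rook_poly n \<alpha>) k * fact (n - ?l - k))"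
    by (simp add: rook_poly_eq_nonconsecutive_poly[OF assms(3)] mult_ac)
  finally show ?thesis .
qed

end
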